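(* Let $\Omega\subset\mathbb{R}^N$ be a bounded domain with smooth boundary, $0<s<1$, $M$ a Young function satisfying $1<m_0:=\inf_{t>0}\frac{tm(t)}{M(t)}\le m^0:=\sup_{t>0}\frac{tm(t)}{M(t)}<\infty$, (S) $t\mapsto M(\sqrt t)$ convex on $[0,\infty)$, and (Q) $\lim_{t\to+\infty}|t|^q/M(t)=0$, where $1<q<\min(p^*,m_0)$, $p^*=Np/(N-p)$ for a fixed $1<p<N$. Let $g:\Omega\times\mathbb{R}\to\mathbb{R}$ be Carathéodory with $G(x,t)=\int_0^t g(x,\tau)d\tau$ satisfying (A) $|g(x,t)|\le C_0|t|^{q-1}$ and (B) $C_1|t|^q\le G(x,t)\le C_2|t|^q$ for all $x\in\Omega,t\in\mathbb{R}$, with $C_0,C_1,C_2>0$. Let $$I_\lambda(u)=\int_{\mathbb{R}^N}\int_{\mathbb{R}^N}M\Big(\frac{u(x)-u(y)}{|x-y|^s}\Big)\frac{dx\,dy}{|x-y|^N}-\lambda\int_\Omega G(x,u)\,dx.$$ Then there exists $\lambda^*>0$ such that for every $\lambda\in(0,\lambda^* )$ there exist $\rho>0$ and $\alpha>0$ with $I_\lambda(u)\ge\alpha$ for all $u\in\tilde W^{s,M}_0(\Omega)$ with $\|u\|=\rho$.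
   Context: A Young function is $M(t)=\int_0^{|t|}m(\tau)\,d\tau$, where $m:\mathbb{R}\to\mathbb{R}$ is an increasing homeomorphism of $\mathbb{R}$ onto $\mathbb{R}$ with $m(0)=0$, $m(t)>0$ for $t>0$, $m(t)\to\infty$ as $t\to\infty$. $L^M$ is the Orlicz space with Luxemburg norm $\|u\|_{(M)}=\inf\{\lambda>0:\int M(u/\lambda)\le1\}$. $W^{s,M}(\mathbb{R}^N)$ is the set of $u\in L^M(\mathbb{R}^N)$ with $\int\int M\big(\frac{u(x)-u(y)}{|x-y|^s}\big)\frac{dxdy}{|x-y|^N}<\infty$, with seminorm $[u]_{(s,M)}=\inf\{\lambda>0:\int\int M\big(\frac{u(x)-u(y)}{\lambda|x-y|^s}\big)\frac{dxdy}{|x-y|^N}\le1\}$ and norm $\|u\|_{(s,M)}=\|u\|_{(M)}+[u]_{(s,M)}$. $\tilde W^{s,M}_0(\Omega)$ is the space of functions in the closure $W^{s,M}_0(\Omega)$ of $C_c^\infty(\Omega)$ in $\|\cdot\|_{(s,M)}$ which vanish a.e. in $\mathbb{R}^N\setminus\Omega$, normed by $\|u\|=[u]_{(s,M)}$. *)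

theory Defs
  imports "HOL-Analysis.Analysis"
begin

inductive_set iter_partials :: "('a::euclidean_space \<Rightarrow> real) \<Rightarrow> ('a \<Rightarrow> real) set"
  for f :: "'a \<Rightarrow> real" where
  base: "f \<in> iter_partials f"
| step: "g \<in> iter_partials f \<Longrightarrow> b \<in> Basis \<Longrightarrow>
           (\<lambda>x. frechet_derivative g (at x) b) \<in> iter_partials f"

definition smooth_fun :: "('a::euclidean_space \<Rightarrow> real) \<Rightarrow> bool" where
  "smooth_fun f \<longleftrightarrow> (\<forall>g \<in> iter_partials f. \<forall>x. g differentiable (at x))"

definition Cc_inf :: "'a::euclidean_space set \<Rightarrow> ('a \<Rightarrow> real) set" where
  "Cc_inf \<Omega> = {\<phi>. smooth_fun \<phi> \<and> compact (closure {x. \<phi> x \<noteq> 0})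
                     \<and> closure {x. \<phi> x \<noteq> 0} \<subseteq> \<Omega>}"

definition smooth_bounded_domain :: "'a::euclidean_space set \<Rightarrow> bool" where
  "smooth_bounded_domain \<Omega> \<longleftrightarrow> open \<Omega> \<and> connected \<Omega> \<and> \<Omega> \<noteq> {} \<and> bounded \<Omega> \<and>
     (\<forall>z \<in> frontier \<Omega>. \<exists>r>0. \<exists>\<psi>. smooth_fun \<psi> \<and> frechet_derivative \<psi> (at z) \<noteq> (\<lambda>_. 0) \<and>
         \<Omega> \<inter> ball z r = {x \<in> ball z r. \<psi> x < 0})"

definition young_density :: "(real \<Rightarrow> real) \<Rightarrow> bool" where
  "young_density m \<longleftrightarrow> strict_mono m \<and> continuous_on UNIV m \<and> surj m \<and> m 0 = 0 \<and>
     (\<forall>t>0. m t > 0) \<and> filterlim m at_top at_top"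

definition young_fun :: "(real \<Rightarrow> real) \<Rightarrow> real \<Rightarrow> real" where
  "young_fun m t = integral {0..\<bar>t\<bar>} m"

definition lower_index :: "(real \<Rightarrow> real) \<Rightarrow> real" where
  "lower_index m = Inf {t * m t / young_fun m t | t. t > 0}"

definition orlicz_modular :: "(real \<Rightarrow> real) \<Rightarrow> ('a::euclidean_space \<Rightarrow> real) \<Rightarrow> ennreal" where
  "orlicz_modular M u = (\<integral>\<^sup>+ x. ennreal (M (u x)) \<partial>lborel)"

definition in_orlicz :: "(real \<Rightarrow> real) \<Rightarrow> ('a::euclidean_space \<Rightarrow> real) \<Rightarrow> bool" where
  "in_orlicz M u \<longleftrightarrow> u \<in> borel_measurable lborel \<and>
     (\<exists>l>0. orlicz_modular M (\<lambda>x. u x / l) < \<infinity>)"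

definition lux_norm :: "(real \<Rightarrow> real) \<Rightarrow> ('a::euclidean_space \<Rightarrow> real) \<Rightarrow> ennreal" where
  "lux_norm M u = Inf {ennreal l | l. l > 0 \<and> orlicz_modular M (\<lambda>x. u x / l) \<le> 1}"

definition frac_modular :: "real \<Rightarrow> (real \<Rightarrow> real) \<Rightarrow> ('a::euclidean_space \<Rightarrow> real) \<Rightarrow> ennreal" where
  "frac_modular s M u = (\<integral>\<^sup>+ x. \<integral>\<^sup>+ y.
      ennreal (M ((u x - u y) / norm (x - y) powr s) / norm (x - y) ^ DIM('a)) \<partial>lborel \<partial>lborel)"

definition frac_seminorm :: "real \<Rightarrow> (real \<Rightarrow> real) \<Rightarrow> ('a::euclidean_space \<Rightarrow> real) \<Rightarrow> ennreal" where
  "frac_seminorm s M u = Inf {ennreal l | l. l > 0 \<and> frac_modular s M (\<lambda>x. u x / l) \<le> 1}"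

definition frac_norm :: "real \<Rightarrow> (real \<Rightarrow> real) \<Rightarrow> ('a::euclidean_space \<Rightarrow> real) \<Rightarrow> ennreal" where
  "frac_norm s M u = lux_norm M u + frac_seminorm s M u"

definition W_sM :: "real \<Rightarrow> (real \<Rightarrow> real) \<Rightarrow> ('a::euclidean_space \<Rightarrow> real) set" where
  "W_sM s M = {u. in_orlicz M u \<and> frac_modular s M u < \<infinity>}"

definition W0_tilde :: "real \<Rightarrow> (real \<Rightarrow> real) \<Rightarrow> 'a::euclidean_space set \<Rightarrow> ('a \<Rightarrow> real) set" where
  "W0_tilde s M \<Omega> = {u. u \<in> W_sM s M \<and>
       (\<exists>\<phi>. (\<forall>k. \<phi> k \<in> Cc_inf \<Omega>) \<and> ((\<lambda>k. frac_norm s M (\<lambda>x. \<phi> k x - u x)) \<longlonglongrightarrow> 0)) \<and>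
       (AE x in lborel. x \<notin> \<Omega> \<longrightarrow> u x = 0)}"

definition caratheodory :: "'a::euclidean_space set \<Rightarrow> ('a \<Rightarrow> real \<Rightarrow> real) \<Rightarrow> bool" where
  "caratheodory \<Omega> g \<longleftrightarrow> (\<forall>t. (\<lambda>x. g x t) \<in> borel_measurable (restrict_space lborel \<Omega>)) \<and>
     (AE x in lborel. x \<in> \<Omega> \<longrightarrow> continuous_on UNIV (g x))"

definition primitive :: "('a \<Rightarrow> real \<Rightarrow> real) \<Rightarrow> 'a \<Rightarrow> real \<Rightarrow> real" where
  "primitive g x t = (LBINT \<tau>=ereal 0..ereal t. g x \<tau>)"

definition energy :: "real \<Rightarrow> (real \<Rightarrow> real) \<Rightarrow> 'a::euclidean_space set \<Rightarrow> ('a \<Rightarrow> real \<Rightarrow> real)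
    \<Rightarrow> real \<Rightarrow> ('a \<Rightarrow> real) \<Rightarrow> real" where
  "energy s M \<Omega> g lam u = enn2real (frac_modular s M u)
      - lam * (LINT x:\<Omega>|lborel. primitive g x (u x))"

end

theory Submission
  imports Defs
begin

(* Since u vanishes outside the bounded set \<Omega>, comparing u(x) with the values u(y) = 0 on a
   fixed unit ball E whose points lie at distance at most D from \<Omega> gives
   |E| / D^N * \<integral>_\<Omega> M(u / D^s) \<le> \<Phi>(u), where \<Phi> is the fractional modular.
   By (Q), |t|^q is dominated by a constant plus a multiple of M(t / D^s), so (B) yields
   |\<integral>_\<Omega> G(x,u)| \<le> b + a \<Phi>(u). On the sphere [u] = 2 the modular exceeds 1, hence
   I_\<lambda>(u) \<ge> (1 - \<lambda> a) \<Phi>(u) - \<lambda> b \<ge> 1/4 whenever \<lambda> < 1/(2a + 4b + 1). *)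

lemma young_density_nonneg: "young_density m \<Longrightarrow> 0 \<le> x \<Longrightarrow> 0 \<le> m x"
  unfolding young_density_def strict_mono_def by (metis dual_order.order_iff_strict)

lemma young_fun_abs: "young_fun m \<bar>t\<bar> = young_fun m t"
  by (simp add: young_fun_def)

lemma young_fun_mono:
  assumes "young_density m" "\<bar>a\<bar> \<le> \<bar>b\<bar>"
  shows "young_fun m a \<le> young_fun m b"
proof -
  have "continuous_on UNIV m" using assms(1) unfolding young_density_def by auto
  then have "m integrable_on {0..\<bar>b\<bar>}" "m integrable_on {0..\<bar>a\<bar>}"
    by (auto intro: integrable_continuous_interval continuous_on_subset)
  then show ?thesis unfolding young_fun_def
    by (intro integral_subset_le) (use assms young_density_nonneg in auto)
qed

lemma young_fun_nonneg: "young_density m \<Longrightarrow> 0 \<le> young_fun m t"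
  using young_fun_mono[of m 0 t] by (simp add: young_fun_def)

lemma borel_measurable_young_fun:
  assumes "young_density m"
  shows "young_fun m \<in> borel_measurable borel"
proof -
  have "mono (\<lambda>r. young_fun m (max 0 r))"
    by (rule monoI) (auto intro: young_fun_mono[OF assms])
  then have "(\<lambda>r. young_fun m (max 0 r)) \<in> borel_measurable borel"
    by (rule borel_measurable_mono)
  then have "(\<lambda>t. young_fun m (max 0 \<bar>t\<bar>)) \<in> borel_measurable borel"
    using borel_measurable_abs[OF measurable_ident_sets[OF refl]] by (rule measurable_compose[rotated])
  then show ?thesis by (simp add: young_fun_abs)
qed

lemma young_fun_pos:
  assumes m: "young_density m" and ind: "1 < lower_index m" and "0 < t"
  shows "0 < young_fun m t"
proof (rule ccontr)
  let ?S = "{t * m t / young_fun m t | t. t > 0}"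
  assume "\<not> ?thesis"
  then have "young_fun m t = 0" using young_fun_nonneg[OF m, of t] by simp
  then have "0 \<in> ?S" using \<open>0 < t\<close> by force
  moreover have "bdd_below ?S"
    by (rule bdd_belowI[of _ 0]) (auto simp: young_density_nonneg[OF m] young_fun_nonneg[OF m])
  ultimately have "Inf ?S \<le> 0" by (rule cInf_lower)
  then show False using ind unfolding lower_index_def by simp
qed

lemma frac_seminorm_le_1:
  assumes "frac_modular s M u \<le> 1"
  shows "frac_seminorm s M u \<le> 1"
proof -
  have "Inf {ennreal l | l. l > 0 \<and> frac_modular s M (\<lambda>x. u x / l) \<le> 1} \<le> ennreal 1"
    by (rule Inf_lower) (use assms in auto)
  then show ?thesis by (simp add: frac_seminorm_def)
qed

lemma powr_le_scaled_young:
  fixes M :: "real \<Rightarrow> real" and q :: real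
  assumes lim: "((\<lambda>t. \<bar>t\<bar> powr q / M t) \<longlongrightarrow> 0) at_top"
    and pos: "\<And>t. 0 < t \<Longrightarrow> 0 < M t" and nonneg: "\<And>t. 0 \<le> M t"
    and even: "\<And>t. M \<bar>t\<bar> = M t" and q: "0 < q"
  obtains T where "\<And>t k. 0 < k \<Longrightarrow> \<bar>t\<bar> powr q \<le> k powr q * (T powr q + M (t / k))"
proof -
  have "\<forall>\<^sub>F t in at_top. \<bar>t\<bar> powr q / M t < 1"
    using lim by (rule order_tendstoD) simp
  then obtain T0 where T0: "\<And>t. t \<ge> T0 \<Longrightarrow> \<bar>t\<bar> powr q / M t < 1"
    by (auto simp: eventually_at_top_linorder)
  define T where "T = max T0 1"
  have large: "r powr q \<le> M r" if "T \<le> r" for r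
    using that T0[of r] pos[of r] by (simp add: T_def divide_less_eq)
  show ?thesis
  proof (rule that)
    fix t k :: real
    assume k: "0 < k"
    define r where "r = \<bar>t\<bar> / k"
    have "r powr q \<le> T powr q + M (t / k)"
    proof (cases "T \<le> r")
      case True
      then show ?thesis
        using large[OF True] even[of "t / k"] k by (simp add: r_def abs_divide add_increasing)
    next
      case False
      then have "r powr q \<le> T powr q" using k q by (intro powr_mono2) (auto simp: r_def)
      then show ?thesis using nonneg[of "t / k"] by linarith
    qed
    moreover have "\<bar>t\<bar> powr q = k powr q * r powr q"
      using k by (simp add: r_def powr_divide)
    ultimately show "\<bar>t\<bar> powr q \<le> k powr q * (T powr q + M (t / k))"
      by (simp add: mult_left_mono)
  qed
qed

lemma bounded_obtain_ball_at_bounded_distance: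
  fixes \<Omega> :: "'a::euclidean_space set"
  assumes "bounded \<Omega>"
  obtains c D where "0 < D" "\<And>x y. x \<in> \<Omega> \<Longrightarrow> y \<in> ball c 1 \<Longrightarrow> 0 < norm (x - y) \<and> norm (x - y) \<le> D"
proof -
  obtain R where R: "0 < R" "\<Omega> \<subseteq> ball 0 R" using assms bounded_subset_ballD by blast
  obtain b :: 'a where "b \<in> Basis" using nonempty_Basis by blast
  define c where "c = (R + 2) *\<^sub>R b"
  have nc: "norm c = R + 2" using R \<open>b \<in> Basis\<close> by (simp add: c_def)
  show ?thesis
  proof
    show "0 < 2 * R + 3" using R by simp
    fix x y assume x: "x \<in> \<Omega>" and y: "y \<in> ball c 1"
    have "norm x < R" using x R by auto
    moreover have "norm (c - y) < 1" using y by (simp add: dist_norm)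
    moreover have "norm c - norm y \<le> norm (c - y)" "norm y - norm c \<le> norm (c - y)"
      using norm_triangle_ineq2[of c y] norm_triangle_ineq2[of y c] by (auto simp: norm_minus_commute)
    moreover have "norm y - norm x \<le> norm (x - y)" "norm (x - y) \<le> norm x + norm y"
      using norm_triangle_ineq2[of y x] norm_triangle_ineq4[of x y] by (auto simp: norm_minus_commute)
    ultimately show "0 < norm (x - y) \<and> norm (x - y) \<le> 2 * R + 3" using nc by linarith
  qed
qed

lemma young_le_frac_inner_integral:
  fixes u :: "'a::euclidean_space \<Rightarrow> real" and M :: "real \<Rightarrow> real" and E :: "'a set"
  assumes mono: "\<And>a b. \<bar>a\<bar> \<le> \<bar>b\<bar> \<Longrightarrow> M a \<le> M b" and nonneg: "\<And>t. 0 \<le> M t"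
    and s: "0 \<le> s" and E: "E \<in> sets lborel" and zero: "AE y in lborel. y \<in> E \<longrightarrow> u y = 0"
    and dist: "\<And>y. y \<in> E \<Longrightarrow> 0 < norm (x - y) \<and> norm (x - y) \<le> D"
  shows "ennreal (M (u x / D powr s) / D ^ n) * emeasure lborel E
           \<le> (\<integral>\<^sup>+ y. ennreal (M ((u x - u y) / norm (x - y) powr s) / norm (x - y) ^ n) \<partial>lborel)"
proof -
  have "ennreal (M (u x / D powr s) / D ^ n) * emeasure lborel E
      = (\<integral>\<^sup>+ y. ennreal (M (u x / D powr s) / D ^ n) * indicator E y \<partial>lborel)"
    using E by (simp add: nn_integral_cmult_indicator)
  also have "\<dots> \<le> (\<integral>\<^sup>+ y. ennreal (M ((u x - u y) / norm (x - y) powr s) / norm (x - y) ^ n) \<partial>lborel)"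
  proof (rule nn_integral_mono_AE)
    show "AE y in lborel. ennreal (M (u x / D powr s) / D ^ n) * indicator E y
            \<le> ennreal (M ((u x - u y) / norm (x - y) powr s) / norm (x - y) ^ n)"
      using zero
    proof eventually_elim
      case (elim y)
      show ?case
      proof (cases "y \<in> E")
        case True
        define r where "r = norm (x - y)"
        have r: "0 < r" "r \<le> D" using dist[OF True] by (auto simp: r_def)
        have "\<bar>u x / D powr s\<bar> \<le> \<bar>u x / r powr s\<bar>"
          using r s by (simp add: abs_divide divide_left_mono powr_mono2)
        then have "M (u x / D powr s) / D ^ n \<le> M (u x / r powr s) / r ^ n"
          using r nonneg by (intro frac_le mono power_mono) auto
        then show ?thesis using True elim by (simp add: r_def ennreal_leI)
      qed simp
    qed
  qed
  finally show ?thesis .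
qed

lemma set_nn_integral_young_le_frac_modular:
  fixes \<Omega> :: "'a::euclidean_space set" and M :: "real \<Rightarrow> real"
  assumes \<Omega>: "bounded \<Omega>" "\<Omega> \<in> sets lborel"
    and mono: "\<And>a b. \<bar>a\<bar> \<le> \<bar>b\<bar> \<Longrightarrow> M a \<le> M b"
    and nonneg: "\<And>t. 0 \<le> M t" and meas: "M \<in> borel_measurable borel" and s: "0 \<le> s"
  obtains D c where "0 < D" "0 \<le> c"
    "\<And>u. u \<in> borel_measurable lborel \<Longrightarrow> (AE x in lborel. x \<notin> \<Omega> \<longrightarrow> u x = 0) \<Longrightarrow>
       (\<integral>\<^sup>+x\<in>\<Omega>. ennreal (M (u x / D powr s)) \<partial>lborel) \<le> ennreal c * frac_modular s M u"
proof -
  obtain D z where D: "0 < D"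
    and dist: "\<And>x y. x \<in> \<Omega> \<Longrightarrow> y \<in> ball z 1 \<Longrightarrow> 0 < norm (x - y) \<and> norm (x - y) \<le> D"
    using bounded_obtain_ball_at_bounded_distance[OF \<Omega>(1)] by metis
  define e where "e = measure lborel (ball z 1)"
  have e: "0 < e" using content_ball_pos[of 1 z] by (simp add: e_def)
  have eE: "emeasure lborel (ball z 1) = ennreal e"
    unfolding e_def using emeasure_lborel_ball_finite[of z 1]
    by (intro emeasure_eq_ennreal_measure) simp
  define k where "k = e / D ^ DIM('a)"
  have k: "0 < k" using e D by (simp add: k_def)
  show ?thesis
  proof
    show "0 < D" "0 \<le> 1 / k" using D k by simp_all
    fix u :: "'a \<Rightarrow> real"
    assume u: "u \<in> borel_measurable lborel" and zero: "AE x in lborel. x \<notin> \<Omega> \<longrightarrow> u x = 0"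
    have disj: "\<Omega> \<inter> ball z 1 = {}" using dist by fastforce
    have zero_ball: "AE y in lborel. y \<in> ball z 1 \<longrightarrow> u y = 0"
      using zero by eventually_elim (use disj in blast)
    have scale: "ennreal k * ennreal t = ennreal (t / D ^ DIM('a)) * emeasure lborel (ball z 1)"
      if "0 \<le> t" for t
      using e D that by (simp add: eE k_def ennreal_mult[symmetric])
    have "ennreal k * (\<integral>\<^sup>+x\<in>\<Omega>. ennreal (M (u x / D powr s)) \<partial>lborel)
        = (\<integral>\<^sup>+x. ennreal k * (ennreal (M (u x / D powr s)) * indicator \<Omega> x) \<partial>lborel)"
      by (rule nn_integral_cmult[symmetric]) (use u meas \<Omega>(2) in measurable)
    also have "\<dots> \<le> frac_modular s M u"
      unfolding frac_modular_def
    proof (rule nn_integral_mono)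
      fix x
      show "ennreal k * (ennreal (M (u x / D powr s)) * indicator \<Omega> x)
          \<le> (\<integral>\<^sup>+y. ennreal (M ((u x - u y) / norm (x - y) powr s) / norm (x - y) ^ DIM('a)) \<partial>lborel)"
      proof (cases "x \<in> \<Omega>")
        case True
        then show ?thesis
          using young_le_frac_inner_integral[OF mono nonneg s _ zero_ball dist[OF True]]
          by (simp add: scale nonneg)
      qed simp
    qed
    finally have "ennreal k * (\<integral>\<^sup>+x\<in>\<Omega>. ennreal (M (u x / D powr s)) \<partial>lborel) \<le> frac_modular s M u" .
    then have "ennreal (1 / k) * (ennreal k * (\<integral>\<^sup>+x\<in>\<Omega>. ennreal (M (u x / D powr s)) \<partial>lborel))
        \<le> ennreal (1 / k) * frac_modular s M u"
      by (rule mult_left_mono) simp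
    then show "(\<integral>\<^sup>+x\<in>\<Omega>. ennreal (M (u x / D powr s)) \<partial>lborel) \<le> ennreal (1 / k) * frac_modular s M u"
      using k by (simp add: mult.assoc[symmetric] ennreal_mult[symmetric])
  qed
qed

lemma abs_set_integral_le_affine:
  fixes f h :: "'a \<Rightarrow> real"
  assumes A: "A \<in> sets M" "emeasure M A \<noteq> \<infinity>" and h: "h \<in> borel_measurable M"
    and bound: "\<And>x. x \<in> A \<Longrightarrow> \<bar>f x\<bar> \<le> b + a * h x" and hnn: "\<And>x. 0 \<le> h x"
    and ab: "0 \<le> a" "0 \<le> b" and r: "0 \<le> r" and int: "(\<integral>\<^sup>+x\<in>A. ennreal (h x) \<partial>M) \<le> ennreal r"
  shows "\<bar>LINT x:A|M. f x\<bar> \<le> b * measure M A + a * r"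
proof -
  define v where "v = measure M A"
  have v: "0 \<le> v" "emeasure M A = ennreal v"
    using A by (simp_all add: v_def emeasure_eq_ennreal_measure)
  have pointwise: "ennreal (norm (indicator A x *\<^sub>R f x))
      \<le> ennreal b * indicator A x + ennreal a * (ennreal (h x) * indicator A x)" for x
  proof (cases "x \<in> A")
    case True
    then have "ennreal \<bar>f x\<bar> \<le> ennreal (b + a * h x)" using bound by (simp add: ennreal_leI)
    then show ?thesis using True ab hnn by (simp add: ennreal_plus ennreal_mult)
  qed simp
  have "(\<integral>\<^sup>+x. ennreal (norm (indicator A x *\<^sub>R f x)) \<partial>M)
      \<le> (\<integral>\<^sup>+x. ennreal b * indicator A x + ennreal a * (ennreal (h x) * indicator A x) \<partial>M)"
    by (rule nn_integral_mono) (rule pointwise)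
  also have "\<dots> = ennreal b * emeasure M A + ennreal a * (\<integral>\<^sup>+x\<in>A. ennreal (h x) \<partial>M)"
    using A h by (simp add: nn_integral_add nn_integral_cmult nn_integral_cmult_indicator)
  also have "\<dots> \<le> ennreal (b * v + a * r)"
    using int ab v r by (simp add: ennreal_mult ennreal_plus mult_left_mono)
  finally have nn: "(\<integral>\<^sup>+x. ennreal (norm (indicator A x *\<^sub>R f x)) \<partial>M) \<le> ennreal (b * v + a * r)" .
  have "norm (LINT x:A|M. f x) \<le> b * v + a * r"
  proof (cases "integrable M (\<lambda>x. indicator A x *\<^sub>R f x)")
    case True
    then have "ennreal (norm (LINT x:A|M. f x)) \<le> ennreal (b * v + a * r)"
      unfolding set_lebesgue_integral_def using nn by (rule order_trans[OF integral_norm_bound_ennreal])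
    moreover have "0 \<le> b * v + a * r" using ab v r by simp
    ultimately show ?thesis by (simp only: ennreal_le_iff)
  qed (use ab v r in \<open>simp add: set_lebesgue_integral_def not_integrable_integral_eq\<close>)
  then show ?thesis by (simp add: v_def)
qed

lemma energy_ge_on_sphere:
  fixes \<Omega> :: "'a::euclidean_space set"
  assumes ab: "0 \<le> a" "0 \<le> b"
    and bound: "\<And>u. u \<in> W0_tilde s M \<Omega> \<Longrightarrow>
      \<bar>LINT x:\<Omega>|lborel. primitive g x (u x)\<bar> \<le> b + a * enn2real (frac_modular s M u)"
  shows "\<exists>lam_star>0. \<forall>lam\<in>{0<..<lam_star}. \<exists>\<rho>>0. \<exists>\<alpha>>0.
           \<forall>u \<in> W0_tilde s M \<Omega>. frac_seminorm s M u = ennreal \<rho> \<longrightarrow> energy s M \<Omega> g lam u \<ge> \<alpha>"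
proof -
  have "1/4 \<le> energy s M \<Omega> g lam u"
    if lam: "0 < lam" "lam < 1 / (2 * a + 4 * b + 1)" and u: "u \<in> W0_tilde s M \<Omega>"
      and sphere: "frac_seminorm s M u = ennreal 2" for lam u
  proof -
    define \<Phi> where "\<Phi> = enn2real (frac_modular s M u)"
    have "frac_modular s M u < \<infinity>" using u by (simp add: W0_tilde_def W_sM_def)
    then have \<Phi>_eq: "frac_modular s M u = ennreal \<Phi>" by (simp add: \<Phi>_def ennreal_enn2real_if)
    have "\<not> frac_modular s M u \<le> 1" using frac_seminorm_le_1 sphere by fastforce
    then have "1 < \<Phi>" using \<Phi>_eq by (simp add: not_le)
    have "lam * (2 * a + 4 * b + 1) < 1" using lam ab by (simp add: field_simps)
    moreover have "lam * (2 * a + 4 * b + 1) = 2 * (lam * a) + 4 * (lam * b) + lam"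
      by algebra
    moreover have "0 \<le> lam * a" "0 \<le> lam * b" using lam ab by simp_all
    ultimately have "lam * a \<le> 1/2" "lam * b \<le> 1/4" using lam by linarith+
    have "(LINT x:\<Omega>|lborel. primitive g x (u x)) \<le> b + a * \<Phi>"
      using bound[OF u] unfolding \<Phi>_def by (meson abs_ge_self order_trans)
    then have "lam * (LINT x:\<Omega>|lborel. primitive g x (u x)) \<le> lam * b + (lam * a) * \<Phi>"
      using mult_left_mono[of _ _ lam] lam by (fastforce simp: distrib_left mult.assoc)
    also have "\<dots> \<le> 1/4 + 1/2 * \<Phi>"
      using \<open>lam * a \<le> 1/2\<close> \<open>lam * b \<le> 1/4\<close> \<open>1 < \<Phi>\<close> by (intro add_mono mult_right_mono) auto
    finally show ?thesis using \<open>1 < \<Phi>\<close> by (simp add: energy_def \<Phi>_def)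
  qed
  then show ?thesis
    using ab by (intro exI[of _ "1 / (2 * a + 4 * b + 1)"] conjI ballI exI[of _ 2] exI[of _ "1/4"]) auto
qed

lemma abs_integral_primitive_le_frac_modular:
  fixes \<Omega> :: "'a::euclidean_space set" and M :: "real \<Rightarrow> real"
  assumes \<Omega>: "bounded \<Omega>" "\<Omega> \<in> sets lborel"
    and mono: "\<And>a b. \<bar>a\<bar> \<le> \<bar>b\<bar> \<Longrightarrow> M a \<le> M b" and nonneg: "\<And>t. 0 \<le> M t"
    and meas: "M \<in> borel_measurable borel" and s: "0 \<le> s"
    and growth: "\<And>t k. 0 < k \<Longrightarrow> \<bar>t\<bar> powr q \<le> k powr q * (T powr q + M (t / k))"
    and C: "0 \<le> C" and G: "\<And>x t. x \<in> \<Omega> \<Longrightarrow> \<bar>primitive g x t\<bar> \<le> C * \<bar>t\<bar> powr q"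
  obtains a b where "0 \<le> a" "0 \<le> b" "\<And>u. u \<in> W0_tilde s M \<Omega> \<Longrightarrow>
      \<bar>LINT x:\<Omega>|lborel. primitive g x (u x)\<bar> \<le> b + a * enn2real (frac_modular s M u)"
proof -
  obtain D c where D: "0 < D" "0 \<le> c" and modular: "\<And>u. u \<in> borel_measurable lborel \<Longrightarrow>
      (AE x in lborel. x \<notin> \<Omega> \<longrightarrow> u x = 0) \<Longrightarrow>
      (\<integral>\<^sup>+x\<in>\<Omega>. ennreal (M (u x / D powr s)) \<partial>lborel) \<le> ennreal c * frac_modular s M u"
    using set_nn_integral_young_le_frac_modular[OF \<Omega> mono nonneg meas s] by blast
  define K where "K = C * (D powr s) powr q"
  have K: "0 \<le> K" using C by (simp add: K_def)
  show ?thesis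
  proof (rule that[of "K * c" "K * T powr q * measure lborel \<Omega>"])
    show "0 \<le> K * c" "0 \<le> K * T powr q * measure lborel \<Omega>" using K D by simp_all
    fix u assume u: "u \<in> W0_tilde s M \<Omega>"
    then have um: "u \<in> borel_measurable lborel" and zero: "AE x in lborel. x \<notin> \<Omega> \<longrightarrow> u x = 0"
      and fin: "frac_modular s M u \<noteq> \<infinity>"
      by (auto simp: W0_tilde_def W_sM_def in_orlicz_def)
    have "\<bar>LINT x:\<Omega>|lborel. primitive g x (u x)\<bar>
        \<le> K * T powr q * measure lborel \<Omega> + K * (c * enn2real (frac_modular s M u))"
    proof (rule abs_set_integral_le_affine)
      show "emeasure lborel \<Omega> \<noteq> \<infinity>" using emeasure_bounded_finite[OF \<Omega>(1)] by simp
      show "(\<lambda>x. M (u x / D powr s)) \<in> borel_measurable lborel"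
        using um by (intro measurable_compose[OF _ meas]) simp
      show "\<bar>primitive g x (u x)\<bar> \<le> K * T powr q + K * M (u x / D powr s)" if "x \<in> \<Omega>" for x
        using G[OF that, of "u x"] mult_left_mono[OF growth[of "D powr s" "u x"] C] D
        by (simp add: K_def algebra_simps)
      show "(\<integral>\<^sup>+x\<in>\<Omega>. ennreal (M (u x / D powr s)) \<partial>lborel) \<le> ennreal (c * enn2real (frac_modular s M u))"
        using modular[OF um zero] fin D by (simp add: ennreal_mult ennreal_enn2real_if)
    qed (use \<Omega> K D nonneg in auto)
    then show "\<bar>LINT x:\<Omega>|lborel. primitive g x (u x)\<bar>
        \<le> K * T powr q * measure lborel \<Omega> + K * c * enn2real (frac_modular s M u)"
      by (simp add: mult.assoc)
  qed
qed

theorem lemma4p1: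
  fixes \<Omega> :: "'a::euclidean_space set"
    and s p q C0 C1 C2 :: real
    and m :: "real \<Rightarrow> real"
    and g :: "'a \<Rightarrow> real \<Rightarrow> real"
  defines "M \<equiv> young_fun m"
  assumes dom: "smooth_bounded_domain \<Omega>"
    and s: "0 < s" "s < 1"
    and m: "young_density m"
    and ind: "1 < lower_index m" "bdd_above {t * m t / M t | t. t > 0}"
    and S: "convex_on {0..} (\<lambda>t. M (sqrt t))"
    and p: "1 < p" "p < real DIM('a)"
    and q: "1 < q" "q < real DIM('a) * p / (real DIM('a) - p)" "q < lower_index m"
    and Q: "((\<lambda>t. \<bar>t\<bar> powr q / M t) \<longlongrightarrow> 0) at_top"
    and car: "caratheodory \<Omega> g"
    and C: "C0 > 0" "C1 > 0" "C2 > 0"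
    and A: "\<forall>x\<in>\<Omega>. \<forall>t. \<bar>g x t\<bar> \<le> C0 * \<bar>t\<bar> powr (q - 1)"
    and B: "\<forall>x\<in>\<Omega>. \<forall>t. C1 * \<bar>t\<bar> powr q \<le> primitive g x t \<and> primitive g x t \<le> C2 * \<bar>t\<bar> powr q"
  shows "\<exists>lam_star>0. \<forall>lam\<in>{0<..<lam_star}. \<exists>\<rho>>0. \<exists>\<alpha>>0.
           \<forall>u \<in> W0_tilde s M \<Omega>. frac_seminorm s M u = ennreal \<rho> \<longrightarrow> energy s M \<Omega> g lam u \<ge> \<alpha>"
proof -
  have mono: "\<And>a b. \<bar>a\<bar> \<le> \<bar>b\<bar> \<Longrightarrow> M a \<le> M b" and nonneg: "\<And>t. 0 \<le> M t"
    and pos: "\<And>t. 0 < t \<Longrightarrow> 0 < M t" and even: "\<And>t. M \<bar>t\<bar> = M t"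
    and meas: "M \<in> borel_measurable borel"
    unfolding M_def
    using young_fun_mono[OF m] young_fun_nonneg[OF m] young_fun_pos[OF m ind(1)] young_fun_abs
      borel_measurable_young_fun[OF m]
    by auto
  obtain T where growth: "\<And>t k. 0 < k \<Longrightarrow> \<bar>t\<bar> powr q \<le> k powr q * (T powr q + M (t / k))"
    using powr_le_scaled_young[OF Q pos nonneg even] q(1) by (meson less_trans zero_less_one)
  have \<Omega>: "bounded \<Omega>" "\<Omega> \<in> sets lborel" using dom by (auto simp: smooth_bounded_domain_def)
  have G: "\<bar>primitive g x t\<bar> \<le> C2 * \<bar>t\<bar> powr q" if "x \<in> \<Omega>" for x t
  proof -
    have "0 \<le> C1 * \<bar>t\<bar> powr q" using C(2) by simp
    moreover have "C1 * \<bar>t\<bar> powr q \<le> primitive g x t" "primitive g x t \<le> C2 * \<bar>t\<bar> powr q"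
      using B that by auto
    ultimately show ?thesis by linarith
  qed
  have "0 \<le> s" "0 \<le> C2" using s C by simp_all
  obtain a b where "0 \<le> a" "0 \<le> b" "\<And>u. u \<in> W0_tilde s M \<Omega> \<Longrightarrow>
      \<bar>LINT x:\<Omega>|lborel. primitive g x (u x)\<bar> \<le> b + a * enn2real (frac_modular s M u)"
    using abs_integral_primitive_le_frac_modular[OF \<Omega> mono nonneg meas \<open>0 \<le> s\<close> growth \<open>0 \<le> C2\<close> G]
    by blast
  then show ?thesis by (rule energy_ge_on_sphere)
qed

end
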